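(* Let $s:\mathbb{R}\to\mathbb{R}$ be continuous, nondecreasing, with $\lim_{x\to-\infty}s(x)=0$ and $\lim_{x\to\infty}s(x)=1$. Let $F:[0,1]^d\to\mathbb{R}$ be of the form $F(\boldsymbol{x})=\sum_{i=1}^N\psi_i(\boldsymbol{a}_i^\top\boldsymbol{x}+b_i)$ with $\boldsymbol{a}_i\in\mathbb{R}^d$, $b_i\in\mathbb{R}$ and each $\psi_i\in C^1(\mathbb{R})$ convex. Then for every $\epsilon>0$ there exist $M\ge1$, $\boldsymbol{W}\in\mathbb{R}^{M\times d}$, $\boldsymbol{c}\in\mathbb{R}^M$, $\boldsymbol{b}\in\mathbb{R}^d$, and scalars $u_j\ge0$, $v_j\ge 0$, $\beta_j\in\mathbb{R}$ ($j=1,\dots,M$) such that, with the elementwise activation $\sigma(\boldsymbol{z})_j=u_j\,s(v_jz_j+\beta_j)$, $$\sup_{\boldsymbol{x}\in[0,1]^d}\|\nabla F(\boldsymbol{x})-(\boldsymbol{W}^\top\sigma(\boldsymbol{W}\boldsymbol{x}+\boldsymbol{c})+\boldsymbol{b})\|<\epsilon .$$ Each such approximator is the gradient of a convex $C^1$ function on $\mathbb{R}^d$.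
   Context: $C^1(\mathbb{R})$ denotes continuously differentiable real functions on $\mathbb{R}$. $\|\cdot\|$ is the Euclidean norm. *)

theory Defs
  imports "HOL-Analysis.Analysis"
begin

definition unit_cube :: "(real ^ 'n) set" where
  "unit_cube = {x. \<forall>i. 0 \<le> x $ i \<and> x $ i \<le> 1}"

text \<open>The network W^T sigma(W x + c) + b, where row j of W is W j (j < M)
  and sigma(z)_j = u_j * s(v_j z_j + beta_j).\<close>
definition grad_net ::
  "(real \<Rightarrow> real) \<Rightarrow> nat \<Rightarrow> (nat \<Rightarrow> real ^ 'n) \<Rightarrow> (nat \<Rightarrow> real) \<Rightarrow> real ^ 'n
   \<Rightarrow> (nat \<Rightarrow> real) \<Rightarrow> (nat \<Rightarrow> real) \<Rightarrow> (nat \<Rightarrow> real) \<Rightarrow> real ^ 'n \<Rightarrow> real ^ 'n" where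
  "grad_net s M W c b u v \<beta> x =
     (\<Sum>j<M. (u j * s (v j * (W j \<bullet> x + c j) + \<beta> j)) *\<^sub>R W j) + b"

definition ridge_sum ::
  "nat \<Rightarrow> (nat \<Rightarrow> real \<Rightarrow> real) \<Rightarrow> (nat \<Rightarrow> real ^ 'n) \<Rightarrow> (nat \<Rightarrow> real) \<Rightarrow> real ^ 'n \<Rightarrow> real" where
  "ridge_sum N \<psi> a bb x = (\<Sum>i<N. \<psi> i (a i \<bullet> x + bb i))"

end

theory Submission
  imports Defs
begin

text \<open>Since each \<open>\<psi>\<^sub>i\<close> is convex and \<open>C\<^sup>1\<close>, its derivative \<open>\<psi>\<^sub>i'\<close> is continuous and
  nondecreasing, and \<open>\<nabla>F(x) = \<Sum>\<^sub>i \<psi>\<^sub>i'(a\<^sub>i \<bullet> x + b\<^sub>i) a\<^sub>i\<close>. On the bounded range of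
  \<open>a\<^sub>i \<bullet> x + b\<^sub>i\<close> over the cube, a continuous nondecreasing function is uniformly close to a
  staircase \<open>c + \<Sum>\<^sub>k d\<^sub>k s(L t + \<beta>\<^sub>k)\<close> with \<open>d\<^sub>k \<ge> 0\<close>: the \<open>d\<^sub>k\<close> are the increments of the
  function over a fine grid, and \<open>L\<close> is so large that every sigmoid is almost a unit step inside
  its grid cell. Multiplied by \<open>a\<^sub>i\<close>, such a staircase is a sum of neurons with nonnegative
  weights and row \<open>a\<^sub>i\<close>, so the approximant is a network of the required shape.

  Conversely, for \<open>u\<^sub>j, v\<^sub>j \<ge> 0\<close> the network is the gradient of
  \<open>\<Phi>(x) = \<Sum>\<^sub>j u\<^sub>j S\<^sub>j(W\<^sub>j \<bullet> x + c\<^sub>j) + b \<bullet> x\<close>, where \<open>S\<^sub>j\<close> is an antiderivative of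
  \<open>t \<mapsto> s(v\<^sub>j t + \<beta>\<^sub>j)\<close>; each \<open>S\<^sub>j\<close> is convex because its derivative is nondecreasing.\<close>

definition sigmoidal :: "(real \<Rightarrow> real) \<Rightarrow> bool" where
  "sigmoidal s \<longleftrightarrow> mono s \<and> (s \<longlongrightarrow> 0) at_bot \<and> (s \<longlongrightarrow> 1) at_top"

lemma sigmoidal_bounds:
  assumes "sigmoidal s"
  shows "0 \<le> s x" "s x \<le> 1"
proof -
  have s: "mono s" "(s \<longlongrightarrow> 0) at_bot" "(s \<longlongrightarrow> 1) at_top"
    using assms by (auto simp: sigmoidal_def)
  have "eventually (\<lambda>y. s y \<le> s x) at_bot"
    unfolding eventually_at_bot_linorder using s(1) by (auto intro: monoD)
  then show "0 \<le> s x" using tendsto_upperbound[OF s(2)] by simp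
  have "eventually (\<lambda>y. s x \<le> s y) at_top"
    unfolding eventually_at_top_linorder using s(1) by (auto intro: monoD)
  then show "s x \<le> 1" using tendsto_lowerbound[OF s(3)] by simp
qed

lemma sigmoidal_sharpening:
  assumes "sigmoidal s" "0 < \<eta>" "0 < r"
  obtains L where "0 \<le> L"
    "\<And>z. r \<le> z \<Longrightarrow> 1 - \<eta> < s (L * z)" "\<And>z. z \<le> -r \<Longrightarrow> s (L * z) < \<eta>"
proof -
  have "eventually (\<lambda>x. 1 - \<eta> < s x) at_top"
    using assms(1,2) by (intro order_tendstoD(1)) (auto simp: sigmoidal_def)
  then obtain X1 where X1: "\<And>x. X1 \<le> x \<Longrightarrow> 1 - \<eta> < s x"
    unfolding eventually_at_top_linorder by blast
  have "eventually (\<lambda>x. s x < \<eta>) at_bot"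
    using assms(1,2) by (intro order_tendstoD(2)) (auto simp: sigmoidal_def)
  then obtain X0 where X0: "\<And>x. x \<le> X0 \<Longrightarrow> s x < \<eta>"
    unfolding eventually_at_bot_linorder by blast
  define L where "L = (\<bar>X1\<bar> + \<bar>X0\<bar>) / r"
  have L: "0 \<le> L" "L * r = \<bar>X1\<bar> + \<bar>X0\<bar>"
    using assms(3) by (auto simp: L_def)
  show thesis
  proof (rule that[OF L(1)])
    fix z assume "r \<le> z"
    then have "L * r \<le> L * z" using L(1) by (rule mult_left_mono)
    then show "1 - \<eta> < s (L * z)" using L(2) by (intro X1) linarith
  next
    fix z assume "z \<le> -r"
    then have "L * z \<le> L * (-r)" using L(1) by (rule mult_left_mono)
    then show "s (L * z) < \<eta>" using L(2) by (intro X0) linarith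
  qed
qed

lemma obtain_grid_cell:
  fixes A h t :: real
  assumes "0 < h" "0 < K" "A \<le> t" "t \<le> A + real K * h"
  obtains m where "m < K" "A + real m * h \<le> t" "t \<le> A + real (Suc m) * h"
proof -
  define q where "q = (t - A) / h"
  have tq: "t = A + q * h" and q: "0 \<le> q" "q \<le> real K"
    using assms by (auto simp: q_def field_simps)
  define m where "m = min (nat \<lfloor>q\<rfloor>) (K - 1)"
  have "m < K" using assms(2) by (simp add: m_def)
  moreover have "real m \<le> q"
  proof -
    have "real (nat \<lfloor>q\<rfloor>) \<le> q"
      using q by simp
    moreover have "real m \<le> real (nat \<lfloor>q\<rfloor>)"
      by (simp add: m_def)
    ultimately show ?thesis by linarith
  qed
  moreover have "q \<le> real (Suc m)"
    using q assms(2) by (auto simp: m_def min_def) (smt (verit) real_of_int_floor_add_one_ge)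
  ultimately show thesis
    using that assms(1) tq by (auto intro: mult_right_mono)
qed

lemma sum_switching_bounds:
  fixes d \<sigma> :: "nat \<Rightarrow> real"
  assumes d: "\<And>k. k < K \<Longrightarrow> 0 \<le> d k"
    and \<sigma>: "\<And>k. k < K \<Longrightarrow> 0 \<le> \<sigma> k \<and> \<sigma> k \<le> 1"
    and on: "\<And>k. k < m \<Longrightarrow> 1 - \<eta> \<le> \<sigma> k"
    and off: "\<And>k. m < k \<Longrightarrow> k < K \<Longrightarrow> \<sigma> k \<le> \<eta>"
    and "m < K" "0 \<le> \<eta>"
  shows "(1 - \<eta>) * (\<Sum>k<m. d k) \<le> (\<Sum>k<K. d k * \<sigma> k)"
    and "(\<Sum>k<K. d k * \<sigma> k) \<le> (\<Sum>k<Suc m. d k) + \<eta> * (\<Sum>k<K. d k)"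
proof -
  have "(1 - \<eta>) * (\<Sum>k<m. d k) \<le> (\<Sum>k<m. d k * \<sigma> k)"
    unfolding sum_distrib_left
    using d on \<open>m < K\<close> by (intro sum_mono) (auto simp: mult.commute[of "1 - \<eta>"] mult_left_mono)
  also have "\<dots> \<le> (\<Sum>k<K. d k * \<sigma> k)"
    using d \<sigma> \<open>m < K\<close> by (intro sum_mono2) auto
  finally show "(1 - \<eta>) * (\<Sum>k<m. d k) \<le> (\<Sum>k<K. d k * \<sigma> k)" .
  have "(\<Sum>k<K. d k * \<sigma> k) \<le> (\<Sum>k<K. (if k < Suc m then d k else 0) + \<eta> * d k)"
  proof (rule sum_mono)
    fix k assume k: "k \<in> {..<K}"
    show "d k * \<sigma> k \<le> (if k < Suc m then d k else 0) + \<eta> * d k"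
    proof (cases "k < Suc m")
      case True
      have "d k * \<sigma> k \<le> d k"
        using d[of k] \<sigma>[of k] k by (simp add: mult_left_le)
      then show ?thesis
        using True k d[of k] \<open>0 \<le> \<eta>\<close> by (simp add: add_increasing2)
    next
      case False
      then show ?thesis
        using d[of k] off[of k] k by (simp add: mult.commute[of "d k"] mult_right_mono)
    qed
  qed
  also have "\<dots> = (\<Sum>k<Suc m. d k) + \<eta> * (\<Sum>k<K. d k)"
  proof -
    have "{..<K} \<inter> {k. k < Suc m} = {..<Suc m}"
      using \<open>m < K\<close> by auto
    then show ?thesis
      by (simp add: sum.distrib sum_distrib_left sum.If_cases)
  qed
  finally show "(\<Sum>k<K. d k * \<sigma> k) \<le> (\<Sum>k<Suc m. d k) + \<eta> * (\<Sum>k<K. d k)" .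
qed

lemma staircase_estimate:
  fixes y \<sigma> :: "nat \<Rightarrow> real"
  assumes y: "\<And>k. k < K \<Longrightarrow> y k \<le> y (Suc k)"
    and \<sigma>: "\<And>k. k < K \<Longrightarrow> 0 \<le> \<sigma> k \<and> \<sigma> k \<le> 1"
    and on: "\<And>k. k < m \<Longrightarrow> 1 - \<eta> \<le> \<sigma> k"
    and off: "\<And>k. m < k \<Longrightarrow> k < K \<Longrightarrow> \<sigma> k \<le> \<eta>"
    and "m < K" "0 \<le> \<eta>"
    and z: "y m \<le> z" "z \<le> y (Suc m)" "y (Suc m) - y m \<le> \<omega>"
  shows "\<bar>z - (y 0 + (\<Sum>k<K. (y (Suc k) - y k) * \<sigma> k))\<bar> \<le> \<omega> + \<eta> * (y K - y 0)"
proof -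
  define d where "d k = y (Suc k) - y k" for k
  have d: "\<And>k. k < K \<Longrightarrow> 0 \<le> d k"
    using y by (simp add: d_def)
  have tele: "(\<Sum>k<n. d k) = y n - y 0" for n
    unfolding d_def by (rule sum_lessThan_telescope)
  have "y m - y 0 \<le> y K - y 0"
    unfolding tele[symmetric] using d \<open>m < K\<close> by (intro sum_mono2) auto
  then have "\<eta> * (y m - y 0) \<le> \<eta> * (y K - y 0)"
    using \<open>0 \<le> \<eta>\<close> by (rule mult_left_mono)
  moreover have "(1 - \<eta>) * (y m - y 0) \<le> (\<Sum>k<K. d k * \<sigma> k)"
    "(\<Sum>k<K. d k * \<sigma> k) \<le> (y (Suc m) - y 0) + \<eta> * (y K - y 0)"
    using sum_switching_bounds[where d=d and \<sigma>=\<sigma>, OF d \<sigma> on off \<open>m < K\<close> \<open>0 \<le> \<eta>\<close>]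
    unfolding tele by simp_all
  ultimately show ?thesis
    using z unfolding d_def by (simp add: algebra_simps abs_le_iff)
qed

lemma continuous_on_Icc_uniform_grid:
  fixes g :: "real \<Rightarrow> real"
  assumes "continuous_on {A..B} g" "A < B" "0 < \<epsilon>"
  obtains K :: nat where "0 < K"
    "\<And>t t'. t \<in> {A..B} \<Longrightarrow> t' \<in> {A..B} \<Longrightarrow> \<bar>t' - t\<bar> \<le> (B - A) / real K \<Longrightarrow> \<bar>g t' - g t\<bar> < \<epsilon>"
proof -
  obtain h0 where "0 < h0" and h0: "\<And>t t'. t \<in> {A..B} \<Longrightarrow> t' \<in> {A..B} \<Longrightarrow>
      dist t' t < h0 \<Longrightarrow> dist (g t') (g t) < \<epsilon>"
    using compact_uniformly_continuous[OF assms(1) compact_Icc] \<open>0 < \<epsilon>\<close>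
    unfolding uniformly_continuous_on_def by metis
  obtain K :: nat where K: "(B - A) / h0 < real K"
    using reals_Archimedean2 by blast
  then have "0 < K"
    using \<open>A < B\<close> \<open>0 < h0\<close> by (cases K) (auto simp: field_simps)
  moreover have "(B - A) / real K < h0"
    using \<open>0 < K\<close> \<open>0 < h0\<close> K by (auto simp: field_simps)
  ultimately show thesis
    using that h0 by (fastforce simp: dist_real_def)
qed

lemma sigmoidal_grid_switches:
  assumes "sigmoidal s" "0 < \<eta>" "0 < h"
  obtains L :: real and \<beta> :: "nat \<Rightarrow> real" where "0 \<le> L"
    "\<And>k m t. k < m \<Longrightarrow> A + real m * h \<le> t \<Longrightarrow> 1 - \<eta> \<le> s (L * t + \<beta> k)"
    "\<And>k m t. m < k \<Longrightarrow> t \<le> A + real (Suc m) * h \<Longrightarrow> s (L * t + \<beta> k) \<le> \<eta>"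
proof -
  obtain L where "0 \<le> L"
    and on: "\<And>z. h / 2 \<le> z \<Longrightarrow> 1 - \<eta> < s (L * z)"
    and off: "\<And>z. z \<le> - (h / 2) \<Longrightarrow> s (L * z) < \<eta>"
    using sigmoidal_sharpening[OF assms(1,2), of "h / 2"] \<open>0 < h\<close> by auto
  \<comment> \<open>unit \<open>k\<close> switches at the midpoint of the cell \<open>[A + k h, A + (k + 1) h]\<close>\<close>
  define \<beta> where "\<beta> k = - L * (A + real (Suc k) * h - h / 2)" for k
  have arg: "L * t + \<beta> k = L * (t - (A + real (Suc k) * h) + h / 2)" for t k
    by (simp add: \<beta>_def algebra_simps)
  show thesis
  proof (rule that[OF \<open>0 \<le> L\<close>])
    fix k m t assume "k < m" "A + real m * h \<le> t"
    moreover have "real (Suc k) * h \<le> real m * h"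
      using \<open>k < m\<close> \<open>0 < h\<close> by (intro mult_right_mono) auto
    ultimately show "1 - \<eta> \<le> s (L * t + \<beta> k)"
      unfolding arg by (intro less_imp_le[OF on]) auto
  next
    fix k m t assume "m < k" "t \<le> A + real (Suc m) * h"
    moreover have "real (Suc m) * h \<le> real k * h"
      using \<open>m < k\<close> \<open>0 < h\<close> by (intro mult_right_mono) auto
    ultimately show "s (L * t + \<beta> k) \<le> \<eta>"
      unfolding arg by (intro less_imp_le[OF off]) (auto simp: algebra_simps)
  qed
qed

lemma sigmoidal_staircase_approx:
  fixes g :: "real \<Rightarrow> real"
  assumes s: "sigmoidal s"
    and g: "continuous_on {A..B} g" "mono_on {A..B} g"
    and "A < B" "0 < \<delta>"
  obtains c L :: real and K :: nat and d \<beta> :: "nat \<Rightarrow> real"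
  where "0 \<le> L" "\<And>k. k < K \<Longrightarrow> 0 \<le> d k"
    "\<And>t. t \<in> {A..B} \<Longrightarrow> \<bar>g t - (c + (\<Sum>k<K. d k * s (L * t + \<beta> k)))\<bar> \<le> \<delta>"
proof -
  obtain K :: nat where "0 < K" and osc: "\<And>t t'. t \<in> {A..B} \<Longrightarrow> t' \<in> {A..B} \<Longrightarrow>
      \<bar>t' - t\<bar> \<le> (B - A) / real K \<Longrightarrow> \<bar>g t' - g t\<bar> < \<delta> / 2"
    using continuous_on_Icc_uniform_grid[OF g(1) \<open>A < B\<close>, of "\<delta> / 2"] \<open>0 < \<delta>\<close> by auto
  define h where "h = (B - A) / real K"
  have "0 < h"
    using \<open>A < B\<close> \<open>0 < K\<close> by (simp add: h_def)
  define \<tau> where "\<tau> n = A + real n * h" for n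
  have \<tau>K: "\<tau> K = B"
    using \<open>0 < K\<close> by (simp add: \<tau>_def h_def)
  have \<tau>_in: "\<tau> i \<in> {A..B}" if "i \<le> K" for i
  proof -
    have "0 \<le> real i * h" "real i * h \<le> real K * h"
      using that \<open>0 < h\<close> by (auto intro: mult_right_mono)
    then show ?thesis
      using \<tau>K unfolding \<tau>_def atLeastAtMost_iff by linarith
  qed
  define D where "D = g B - g A"
  define \<eta> where "\<eta> = \<delta> / (2 * (D + 1))"
  have "0 \<le> D"
    using g(2) \<open>A < B\<close> by (auto simp: D_def intro: mono_onD)
  then have "0 < \<eta>" "\<eta> * D \<le> \<delta> / 2"
    using \<open>0 < \<delta>\<close> by (auto simp: \<eta>_def field_simps)
  obtain L \<beta> where "0 \<le> L"
    and on: "\<And>k m t. k < m \<Longrightarrow> \<tau> m \<le> t \<Longrightarrow> 1 - \<eta> \<le> s (L * t + \<beta> k)"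
    and off: "\<And>k m t. m < k \<Longrightarrow> t \<le> \<tau> (Suc m) \<Longrightarrow> s (L * t + \<beta> k) \<le> \<eta>"
    using sigmoidal_grid_switches[where A=A, OF s \<open>0 < \<eta>\<close> \<open>0 < h\<close>] unfolding \<tau>_def by blast
  have g_step: "g (\<tau> k) \<le> g (\<tau> (Suc k))" if "k < K" for k
  proof (rule mono_onD[OF g(2)])
    show "\<tau> k \<in> {A..B}" "\<tau> (Suc k) \<in> {A..B}"
      using that \<tau>_in[of k] \<tau>_in[of "Suc k"] by simp_all
    show "\<tau> k \<le> \<tau> (Suc k)"
      using \<open>0 < h\<close> by (simp add: \<tau>_def)
  qed
  show thesis
  proof (rule that[where c="g (\<tau> 0)" and L=L and K=K and d="\<lambda>k. g (\<tau> (Suc k)) - g (\<tau> k)" and \<beta>=\<beta>])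
    show "0 \<le> L" by fact
    show "0 \<le> g (\<tau> (Suc k)) - g (\<tau> k)" if "k < K" for k
      using g_step[OF that] by simp
    fix t assume t: "t \<in> {A..B}"
    obtain m where m: "m < K" "\<tau> m \<le> t" "t \<le> \<tau> (Suc m)"
      using obtain_grid_cell[OF \<open>0 < h\<close> \<open>0 < K\<close>, of A t] t \<tau>K unfolding \<tau>_def by auto
    have "\<bar>g t - (g (\<tau> 0) + (\<Sum>k<K. (g (\<tau> (Suc k)) - g (\<tau> k)) * s (L * t + \<beta> k)))\<bar>
        \<le> \<delta> / 2 + \<eta> * (g (\<tau> K) - g (\<tau> 0))"
    proof (rule staircase_estimate[where y="\<lambda>k. g (\<tau> k)" and \<sigma>="\<lambda>k. s (L * t + \<beta> k)"])
      show "g (\<tau> m) \<le> g t" "g t \<le> g (\<tau> (Suc m))"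
        using m t \<tau>_in by (auto intro: mono_onD[OF g(2)])
      have "\<tau> (Suc m) - \<tau> m = h"
        by (simp add: \<tau>_def algebra_simps)
      then have "\<bar>\<tau> (Suc m) - \<tau> m\<bar> \<le> (B - A) / real K"
        using \<open>0 < h\<close> by (simp add: h_def)
      then have "\<bar>g (\<tau> (Suc m)) - g (\<tau> m)\<bar> < \<delta> / 2"
        using osc[OF \<tau>_in \<tau>_in, of m "Suc m"] m(1) by simp
      then show "g (\<tau> (Suc m)) - g (\<tau> m) \<le> \<delta> / 2"
        by linarith
    qed (use g_step on m off sigmoidal_bounds[OF s] \<open>0 < \<eta>\<close> in auto)
    then show "\<bar>g t - (g (\<tau> 0) + (\<Sum>k<K. (g (\<tau> (Suc k)) - g (\<tau> k)) * s (L * t + \<beta> k)))\<bar> \<le> \<delta>"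
      using \<open>\<eta> * D \<le> \<delta> / 2\<close> \<tau>K by (simp add: \<tau>_def D_def)
  qed
qed

lemma convex_on_UNIV_deriv_mono:
  fixes f :: "real \<Rightarrow> real"
  assumes "convex_on UNIV f" "\<And>x. (f has_real_derivative f' x) (at x)"
  shows "mono f'"
proof (rule monoI)
  fix x y :: real assume "x \<le> y"
  have "f' x * (y - x) \<le> f y - f x" "f' y * (x - y) \<le> f x - f y"
    using assms by (auto intro!: convex_on_imp_above_tangent)
  then have "0 \<le> (f' y - f' x) * (y - x)"
    by (simp add: algebra_simps)
  then show "f' x \<le> f' y"
    using \<open>x \<le> y\<close> by (cases "x = y") (auto simp: zero_le_mult_iff)
qed

lemma continuous_on_UNIV_has_antiderivative:
  fixes f :: "real \<Rightarrow> real"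
  assumes "continuous_on UNIV f"
  obtains F where "\<And>x. (F has_real_derivative f x) (at x)"
proof
  fix x :: real
  have "((\<lambda>u. LBINT y=0..u. f y) has_vector_derivative f x) (at x within {-\<bar>x\<bar>-1..\<bar>x\<bar>+1})"
    using interval_integral_FTC2[of "-\<bar>x\<bar>-1" 0 "\<bar>x\<bar>+1" f x] continuous_on_subset[OF assms]
    by (simp add: zero_ereal_def)
  moreover have "at x within {-\<bar>x\<bar>-1..\<bar>x\<bar>+1} = at x"
    by (rule at_within_Icc_at) auto
  ultimately show "((\<lambda>u. LBINT y=0..u. f y) has_real_derivative f x) (at x)"
    by (simp add: has_real_derivative_iff_has_vector_derivative)
qed

lemma convex_on_sum_fun:
  assumes "finite I" "\<And>i. i \<in> I \<Longrightarrow> convex_on S (f i)" "convex S"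
  shows "convex_on S (\<lambda>x. \<Sum>i\<in>I. f i x)"
  using assms by (induction I rule: finite_induct) (auto simp: convex_on_const)

lemma convex_on_compose_affine:
  fixes g :: "real \<Rightarrow> real" and w :: "'a::real_inner"
  assumes "convex_on UNIV g"
  shows "convex_on UNIV (\<lambda>x. g (w \<bullet> x + c))"
proof (rule convex_onI)
  fix t :: real and x y :: 'a
  assume "0 < t" "t < 1"
  have "w \<bullet> ((1 - t) *\<^sub>R x + t *\<^sub>R y) + c = (1 - t) * (w \<bullet> x + c) + t * (w \<bullet> y + c)"
    by (simp add: inner_add_right algebra_simps)
  then show "g (w \<bullet> ((1 - t) *\<^sub>R x + t *\<^sub>R y) + c) \<le> (1 - t) * g (w \<bullet> x + c) + t * g (w \<bullet> y + c)"
    using convex_onD[OF assms, of t] \<open>0 < t\<close> \<open>t < 1\<close> by simp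
qed simp

lemma convex_on_inner_left: "convex_on UNIV (\<lambda>x::'a::real_inner. b \<bullet> x)"
  by (rule convex_onI) (simp_all add: inner_add_right)

lemma grad_net_convex_potential:
  fixes s :: "real \<Rightarrow> real" and W :: "nat \<Rightarrow> real ^ 'n"
  assumes "continuous_on UNIV s" "mono s" and uv: "\<forall>j<M. 0 \<le> u j \<and> 0 \<le> v j"
  obtains \<Phi> :: "real ^ 'n \<Rightarrow> real" where "convex_on UNIV \<Phi>"
    "\<And>x. (\<Phi> has_derivative (\<lambda>h. grad_net s M W c b u v \<beta> x \<bullet> h)) (at x)"
proof -
  have "continuous_on UNIV (\<lambda>t. s (v j * t + \<beta> j))" for j
    by (intro continuous_on_compose2[OF assms(1)] continuous_intros) auto
  then have "\<exists>S. \<forall>t. (S has_real_derivative s (v j * t + \<beta> j)) (at t)" for j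
    by (meson continuous_on_UNIV_has_antiderivative)
  then obtain S where S: "\<And>j t. (S j has_real_derivative s (v j * t + \<beta> j)) (at t)"
    by metis
  have S_convex: "convex_on UNIV (S j)" if "j < M" for j
    using uv that by (intro convex_on_realI[OF _ S] monoD[OF assms(2)]) (auto intro: mult_left_mono)
  define \<Phi> where "\<Phi> x = (\<Sum>j<M. u j * S j (W j \<bullet> x + c j)) + b \<bullet> x" for x
  show thesis
  proof (rule that)
    show "convex_on UNIV \<Phi>"
      unfolding \<Phi>_def using uv
      by (intro convex_on_add convex_on_sum_fun convex_on_cmul convex_on_compose_affine
          S_convex convex_on_inner_left) auto
    fix x :: "real ^ 'n"
    have "((\<lambda>x. S j (W j \<bullet> x + c j)) has_derivative
           (\<lambda>h. s (v j * (W j \<bullet> x + c j) + \<beta> j) * (W j \<bullet> h))) (at x)" for j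
    proof -
      have "((\<lambda>x. W j \<bullet> x + c j) has_derivative (\<lambda>h. W j \<bullet> h)) (at x)"
        by (auto intro!: derivative_eq_intros)
      from has_derivative_compose[OF this S[unfolded has_field_derivative_def]] show ?thesis .
    qed
    then have "(\<Phi> has_derivative
        (\<lambda>h. (\<Sum>j<M. u j * (s (v j * (W j \<bullet> x + c j) + \<beta> j) * (W j \<bullet> h))) + b \<bullet> h)) (at x)"
      unfolding \<Phi>_def by (auto intro!: derivative_eq_intros)
    then show "(\<Phi> has_derivative (\<lambda>h. grad_net s M W c b u v \<beta> x \<bullet> h)) (at x)"
      by (simp add: grad_net_def inner_add_left inner_sum_left mult.assoc)
  qed
qed

lemma continuous_on_grad_net:
  assumes "continuous_on UNIV s"
  shows "continuous_on UNIV (grad_net s M W c b u v \<beta>)"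
  unfolding grad_net_def[abs_def]
  by (intro continuous_intros continuous_on_compose2[OF assms]) auto

text \<open>Networks are built one neuron at a time, so that closure under addition is a plain
  induction and never requires reindexing the rows of \<open>W\<close>.\<close>

inductive grad_net_representable :: "(real \<Rightarrow> real) \<Rightarrow> (real ^ 'n \<Rightarrow> real ^ 'n) \<Rightarrow> bool"
  for s :: "real \<Rightarrow> real" where
  const: "grad_net_representable s (\<lambda>x. b)"
| neuron: "grad_net_representable s f \<Longrightarrow> 0 \<le> u \<Longrightarrow> 0 \<le> v \<Longrightarrow>
    grad_net_representable s (\<lambda>x. f x + (u * s (v * (w \<bullet> x + c) + \<beta>)) *\<^sub>R w)"

lemma grad_net_fun_upd:
  "grad_net s (Suc M) (W(M := w)) (c(M := c')) b (u(M := u')) (v(M := v')) (\<beta>(M := \<beta>')) x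
   = grad_net s M W c b u v \<beta> x + (u' * s (v' * (w \<bullet> x + c') + \<beta>')) *\<^sub>R w"
proof -
  have "(\<Sum>j<M. ((u(M := u')) j * s ((v(M := v')) j * ((W(M := w)) j \<bullet> x + (c(M := c')) j)
            + (\<beta>(M := \<beta>')) j)) *\<^sub>R (W(M := w)) j)
      = (\<Sum>j<M. (u j * s (v j * (W j \<bullet> x + c j) + \<beta> j)) *\<^sub>R W j)"
    by (rule sum.cong) auto
  then show ?thesis
    unfolding grad_net_def by (simp add: algebra_simps)
qed

lemma grad_net_representable_imp_grad_net:
  assumes "grad_net_representable s f"
  shows "\<exists>M W c b u v \<beta>. 1 \<le> M \<and> (\<forall>j<M. 0 \<le> u j \<and> 0 \<le> v j) \<and>
           (\<forall>x. grad_net s M W c b u v \<beta> x = f x)"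
  using assms
proof induction
  case (const b)
  have "grad_net s 1 (\<lambda>_. 0) (\<lambda>_. 0) b (\<lambda>_. 0) (\<lambda>_. 0) (\<lambda>_. 0) x = b" for x
    by (simp add: grad_net_def)
  then show ?case by fastforce
next
  case (neuron f u' v' w c' \<beta>')
  then obtain M W c b u v \<beta> where "1 \<le> M" "\<forall>j<M. 0 \<le> u j \<and> 0 \<le> v j"
    "\<forall>x. grad_net s M W c b u v \<beta> x = f x"
    by blast
  moreover have "\<forall>j<Suc M. 0 \<le> (u(M := u')) j \<and> 0 \<le> (v(M := v')) j"
    using neuron.hyps(2,3) calculation(2) by auto
  moreover have "\<forall>x. grad_net s (Suc M) (W(M := w)) (c(M := c')) b (u(M := u')) (v(M := v')) (\<beta>(M := \<beta>')) x
      = f x + (u' * s (v' * (w \<bullet> x + c') + \<beta>')) *\<^sub>R w"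
    using calculation(3) by (simp add: grad_net_fun_upd)
  ultimately show ?case
    using le_SucI by blast
qed

lemma grad_net_representable_add_const:
  "grad_net_representable s f \<Longrightarrow> grad_net_representable s (\<lambda>x. f x + b)"
proof (induction rule: grad_net_representable.induct)
  case (const b')
  then show ?case by (rule grad_net_representable.const)
next
  case (neuron f u v w c \<beta>)
  then show ?case
    using grad_net_representable.neuron[of s "\<lambda>x. f x + b" u v w c \<beta>] by (simp add: algebra_simps)
qed

lemma grad_net_representable_add:
  assumes "grad_net_representable s f" "grad_net_representable s g"
  shows "grad_net_representable s (\<lambda>x. f x + g x)"
  using assms(2)
proof induction
  case (const b)
  then show ?case by (rule grad_net_representable_add_const[OF assms(1)])
next
  case (neuron g u v w c \<beta>)
  then show ?case
    using grad_net_representable.neuron[of s "\<lambda>x. f x + g x" u v w c \<beta>] by (simp add: add.assoc)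
qed

lemma grad_net_representable_sum:
  assumes "finite I" "\<And>i. i \<in> I \<Longrightarrow> grad_net_representable s (f i)"
  shows "grad_net_representable s (\<lambda>x. \<Sum>i\<in>I. f i x)"
  using assms
  by (induction I rule: finite_induct)
     (auto intro: grad_net_representable.const grad_net_representable_add)

lemma grad_net_representable_ridge:
  fixes K :: nat
  assumes "\<And>k. k < K \<Longrightarrow> 0 \<le> d k" "0 \<le> L"
  shows "grad_net_representable s
           (\<lambda>x. (b + (\<Sum>k<K. d k * s (L * (w \<bullet> x + c) + \<beta> k))) *\<^sub>R w)"
proof -
  have "grad_net_representable s (\<lambda>x. (d k * s (L * (w \<bullet> x + c) + \<beta> k)) *\<^sub>R w)" if "k < K" for k
    using grad_net_representable.neuron[OF grad_net_representable.const, of "d k" L s 0 w c "\<beta> k"]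
      assms that by simp
  then have "grad_net_representable s (\<lambda>x. \<Sum>k<K. (d k * s (L * (w \<bullet> x + c) + \<beta> k)) *\<^sub>R w)"
    by (intro grad_net_representable_sum) auto
  then have "grad_net_representable s (\<lambda>x. (\<Sum>k<K. (d k * s (L * (w \<bullet> x + c) + \<beta> k)) *\<^sub>R w) + b *\<^sub>R w)"
    by (rule grad_net_representable_add_const)
  then show ?thesis
    by (simp add: scaleR_add_left scaleR_sum_left add.commute)
qed

lemma ridge_field_approx:
  fixes S :: "(real ^ 'n) set" and G :: "real \<Rightarrow> real"
  assumes s: "sigmoidal s" and "bounded S" "continuous_on UNIV G" "mono G" "0 < \<epsilon>"
  obtains f where "grad_net_representable s f"
    "\<And>x. x \<in> S \<Longrightarrow> norm (G (w \<bullet> x + c) *\<^sub>R w - f x) \<le> \<epsilon>"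
proof -
  obtain R where R: "\<And>x. x \<in> S \<Longrightarrow> norm x \<le> R"
    using \<open>bounded S\<close> bounded_iff by blast
  define r where "r = norm w * \<bar>R\<bar> + 1"
  have "c - r < c + r"
    by (simp add: r_def add_pos_nonneg)
  define \<delta> where "\<delta> = \<epsilon> / (norm w + 1)"
  have "0 < \<delta>"
    using \<open>0 < \<epsilon>\<close> by (simp add: \<delta>_def add_nonneg_pos)
  have "\<delta> * norm w \<le> \<epsilon>"
  proof -
    have "\<delta> * norm w = \<epsilon> * (norm w / (norm w + 1))"
      by (simp add: \<delta>_def)
    also have "\<dots> \<le> \<epsilon>"
      using \<open>0 < \<epsilon>\<close> by (intro mult_left_le) (auto simp: add_nonneg_pos)
    finally show ?thesis .
  qed
  obtain b L :: real and K :: nat and d \<beta> :: "nat \<Rightarrow> real"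
    where ridge: "0 \<le> L" "\<And>k. k < K \<Longrightarrow> 0 \<le> d k"
      and approx: "\<And>t. t \<in> {c - r..c + r} \<Longrightarrow> \<bar>G t - (b + (\<Sum>k<K. d k * s (L * t + \<beta> k)))\<bar> \<le> \<delta>"
    using sigmoidal_staircase_approx[OF s continuous_on_subset[OF assms(3) subset_UNIV] mono_imp_mono_on[OF assms(4)]
        \<open>c - r < c + r\<close> \<open>0 < \<delta>\<close>] by metis
  show thesis
  proof (rule that[OF grad_net_representable_ridge[OF ridge(2,1), where s=s and b=b and w=w and c=c and \<beta>=\<beta>]])
    fix x assume "x \<in> S"
    have "\<bar>w \<bullet> x\<bar> \<le> norm w * norm x"
      by (rule Cauchy_Schwarz_ineq2)
    also have "\<dots> \<le> norm w * \<bar>R\<bar>"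
      using R[OF \<open>x \<in> S\<close>] by (intro mult_left_mono) auto
    finally have "w \<bullet> x + c \<in> {c - r..c + r}"
      by (auto simp: r_def abs_le_iff)
    define y where "y = b + (\<Sum>k<K. d k * s (L * (w \<bullet> x + c) + \<beta> k))"
    have "norm (G (w \<bullet> x + c) *\<^sub>R w - y *\<^sub>R w) = \<bar>G (w \<bullet> x + c) - y\<bar> * norm w"
      by (simp add: y_def flip: scaleR_diff_left)
    also have "\<dots> \<le> \<delta> * norm w"
      using approx[OF \<open>w \<bullet> x + c \<in> {c - r..c + r}\<close>] by (simp add: y_def mult_right_mono)
    finally show "norm (G (w \<bullet> x + c) *\<^sub>R w - y *\<^sub>R w) \<le> \<epsilon>"
      using \<open>\<delta> * norm w \<le> \<epsilon>\<close> by simp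
  qed
qed

lemma ridge_sum_field_approx:
  fixes S :: "(real ^ 'n) set" and G :: "nat \<Rightarrow> real \<Rightarrow> real"
  assumes s: "sigmoidal s" and "bounded S"
    and G: "\<And>i. i < N \<Longrightarrow> continuous_on UNIV (G i)" "\<And>i. i < N \<Longrightarrow> mono (G i)"
    and "0 < \<epsilon>"
  obtains f where "grad_net_representable s f"
    "\<And>x. x \<in> S \<Longrightarrow> norm ((\<Sum>i<N. G i (w i \<bullet> x + c i) *\<^sub>R w i) - f x) \<le> \<epsilon>"
proof -
  define \<delta> where "\<delta> = \<epsilon> / (real N + 1)"
  have "0 < \<delta>"
    using \<open>0 < \<epsilon>\<close> by (simp add: \<delta>_def)
  have "\<exists>f. grad_net_representable s f \<and>
          (\<forall>x\<in>S. norm (G i (w i \<bullet> x + c i) *\<^sub>R w i - f x) \<le> \<delta>)" if "i < N" for i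
    by (rule ridge_field_approx[OF s \<open>bounded S\<close> G[OF that] \<open>0 < \<delta>\<close>]) blast
  then obtain F where F: "\<And>i. i < N \<Longrightarrow> grad_net_representable s (F i) \<and>
      (\<forall>x\<in>S. norm (G i (w i \<bullet> x + c i) *\<^sub>R w i - F i x) \<le> \<delta>)"
    by metis
  show thesis
  proof (rule that[OF grad_net_representable_sum[of "{..<N}" s F]])
    fix x assume "x \<in> S"
    have "norm ((\<Sum>i<N. G i (w i \<bullet> x + c i) *\<^sub>R w i) - (\<Sum>i<N. F i x))
        \<le> (\<Sum>i<N. norm (G i (w i \<bullet> x + c i) *\<^sub>R w i - F i x))"
      by (simp flip: sum_subtractf add: norm_sum)
    also have "\<dots> \<le> real N * \<delta>"
      using F \<open>x \<in> S\<close> sum_mono[of "{..<N}" "\<lambda>i. norm (G i (w i \<bullet> x + c i) *\<^sub>R w i - F i x)" "\<lambda>_. \<delta>"]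
      by simp
    also have "\<dots> \<le> \<epsilon>"
      using \<open>0 < \<epsilon>\<close> by (simp add: \<delta>_def field_simps)
    finally show "norm ((\<Sum>i<N. G i (w i \<bullet> x + c i) *\<^sub>R w i) - (\<Sum>i<N. F i x)) \<le> \<epsilon>" .
  qed (use F in auto)
qed

lemma ridge_sum_gradient:
  assumes "\<And>i t. i < N \<Longrightarrow> (\<psi> i has_real_derivative \<psi>' i t) (at t)"
    and "(ridge_sum N \<psi> a bb has_derivative (\<lambda>h. g \<bullet> h)) (at x)"
  shows "g = (\<Sum>i<N. \<psi>' i (a i \<bullet> x + bb i) *\<^sub>R a i)"
proof -
  have "((\<lambda>x. \<psi> i (a i \<bullet> x + bb i)) has_derivative (\<lambda>h. \<psi>' i (a i \<bullet> x + bb i) * (a i \<bullet> h))) (at x)"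
    if "i < N" for i
  proof -
    have "((\<lambda>x. a i \<bullet> x + bb i) has_derivative (\<lambda>h. a i \<bullet> h)) (at x)"
      by (auto intro!: derivative_eq_intros)
    from has_derivative_compose[OF this assms(1)[OF that, unfolded has_field_derivative_def]]
    show ?thesis .
  qed
  then have "(ridge_sum N \<psi> a bb has_derivative
      (\<lambda>h. (\<Sum>i<N. \<psi>' i (a i \<bullet> x + bb i) *\<^sub>R a i) \<bullet> h)) (at x)"
    unfolding ridge_sum_def[abs_def] inner_sum_left inner_scaleR_left
    by (rule has_derivative_sum) simp
  from has_derivative_unique[OF assms(2) this] show ?thesis
    by (metis vector_eq_rdot)
qed

lemma bounded_unit_cube: "bounded (unit_cube :: (real ^ 'n) set)"
proof -
  have "unit_cube = cbox (0 :: real ^ 'n) 1"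
    by (auto simp: unit_cube_def mem_box_cart)
  then show ?thesis
    by (metis bounded_cbox)
qed

lemma convex_ridge_sum_gradient_approx:
  fixes S :: "(real ^ 'n) set"
  assumes s: "sigmoidal s" and "bounded S" "0 < \<epsilon>"
    and psi_diff: "\<And>i t. i < N \<Longrightarrow> \<psi> i differentiable at t"
    and psi_C1: "\<And>i. i < N \<Longrightarrow> continuous_on UNIV (deriv (\<psi> i))"
    and psi_convex: "\<And>i. i < N \<Longrightarrow> convex_on UNIV (\<psi> i)"
    and gradF: "\<And>x. (ridge_sum N \<psi> a bb has_derivative (\<lambda>h. gradF x \<bullet> h)) (at x)"
  obtains M W c b u v \<beta> where "1 \<le> M" "\<forall>j<M. 0 \<le> u j \<and> 0 \<le> v j"
    "\<And>x. x \<in> S \<Longrightarrow> norm (gradF x - grad_net s M W c b u v \<beta> x) \<le> \<epsilon>"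
proof -
  have dpsi: "(\<psi> i has_real_derivative deriv (\<psi> i) t) (at t)" if "i < N" for i t
    using psi_diff[OF that] by (simp add: DERIV_deriv_iff_real_differentiable)
  have deriv_mono: "mono (deriv (\<psi> i))" if "i < N" for i
    using convex_on_UNIV_deriv_mono[OF psi_convex dpsi] that by blast
  obtain f where "grad_net_representable s f" and f:
      "\<And>x. x \<in> S \<Longrightarrow> norm ((\<Sum>i<N. deriv (\<psi> i) (a i \<bullet> x + bb i) *\<^sub>R a i) - f x) \<le> \<epsilon>"
    using ridge_sum_field_approx[where G="\<lambda>i. deriv (\<psi> i)" and N=N and w=a and c=bb,
          OF s \<open>bounded S\<close> psi_C1 deriv_mono \<open>0 < \<epsilon>\<close>] by blast
  then obtain M W c b u v \<beta> where net: "1 \<le> M" "\<forall>j<M. 0 \<le> u j \<and> 0 \<le> v j"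
      "\<And>x. grad_net s M W c b u v \<beta> x = f x"
    using grad_net_representable_imp_grad_net by metis
  show thesis
  proof (rule that[OF net(1,2)])
    fix x assume "x \<in> S"
    have "gradF x = (\<Sum>i<N. deriv (\<psi> i) (a i \<bullet> x + bb i) *\<^sub>R a i)"
      by (rule ridge_sum_gradient[OF dpsi gradF])
    then show "norm (gradF x - grad_net s M W c b u v \<beta> x) \<le> \<epsilon>"
      using f[OF \<open>x \<in> S\<close>] net(3) by simp
  qed
qed

theorem theorem4:
  fixes s :: "real \<Rightarrow> real"
    and N :: nat
    and \<psi> :: "nat \<Rightarrow> real \<Rightarrow> real"
    and a :: "nat \<Rightarrow> real ^ 'n"
    and bb :: "nat \<Rightarrow> real"
    and gradF :: "real ^ 'n \<Rightarrow> real ^ 'n"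
  assumes s_cont: "continuous_on UNIV s"
    and s_mono: "mono s"
    and s_bot: "(s \<longlongrightarrow> 0) at_bot"
    and s_top: "(s \<longlongrightarrow> 1) at_top"
    and psi_diff: "\<And>i t. i < N \<Longrightarrow> \<psi> i differentiable at t"
    and psi_C1: "\<And>i. i < N \<Longrightarrow> continuous_on UNIV (deriv (\<psi> i))"
    and psi_convex: "\<And>i. i < N \<Longrightarrow> convex_on UNIV (\<psi> i)"
    and gradF: "\<And>x. (ridge_sum N \<psi> a bb has_derivative (\<lambda>h. gradF x \<bullet> h)) (at x)"
  shows "(\<forall>\<epsilon>>0. \<exists>M W c b u v \<beta>. M \<ge> 1 \<and> (\<forall>j<M. u j \<ge> 0 \<and> v j \<ge> 0) \<and>
            (SUP x\<in>unit_cube. norm (gradF x - grad_net s M W c b u v \<beta> x)) < \<epsilon>)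
       \<and> (\<forall>M W c b u v \<beta>. (\<forall>j<M. u j \<ge> 0 \<and> v j \<ge> 0) \<longrightarrow>
            (\<exists>\<Phi> :: real ^ 'n \<Rightarrow> real. convex_on UNIV \<Phi> \<and>
               (\<forall>x. (\<Phi> has_derivative (\<lambda>h. grad_net s M W c b u v \<beta> x \<bullet> h)) (at x)) \<and>
               continuous_on UNIV (grad_net s M W c b u v \<beta>)))"
proof (intro conjI allI impI)
  fix \<epsilon> :: real assume "0 < \<epsilon>"
  have "sigmoidal s"
    using s_mono s_bot s_top by (simp add: sigmoidal_def)
  moreover have "0 < \<epsilon> / 2"
    using \<open>0 < \<epsilon>\<close> by simp
  ultimately obtain M W c b u v \<beta> where net: "1 \<le> M" "\<forall>j<M. 0 \<le> u j \<and> 0 \<le> v j"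
      "\<And>x. x \<in> unit_cube \<Longrightarrow> norm (gradF x - grad_net s M W c b u v \<beta> x) \<le> \<epsilon> / 2"
    using convex_ridge_sum_gradient_approx[OF _ bounded_unit_cube _ psi_diff psi_C1 psi_convex gradF]
    by metis
  have "unit_cube \<noteq> ({} :: (real ^ 'n) set)"
    by (auto simp: unit_cube_def intro!: exI[of _ 0])
  then have "(SUP x\<in>unit_cube. norm (gradF x - grad_net s M W c b u v \<beta> x)) \<le> \<epsilon> / 2"
    using net(3) by (rule cSUP_least)
  then have "(SUP x\<in>unit_cube. norm (gradF x - grad_net s M W c b u v \<beta> x)) < \<epsilon>"
    using \<open>0 < \<epsilon>\<close> by linarith
  with net(1,2) show "\<exists>M W c b u v \<beta>. M \<ge> 1 \<and> (\<forall>j<M. u j \<ge> 0 \<and> v j \<ge> 0) \<and>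
      (SUP x\<in>unit_cube. norm (gradF x - grad_net s M W c b u v \<beta> x)) < \<epsilon>"
    by blast
next
  fix M :: nat and W :: "nat \<Rightarrow> real ^ 'n" and c u v \<beta> :: "nat \<Rightarrow> real" and b :: "real ^ 'n"
  assume "\<forall>j<M. u j \<ge> 0 \<and> v j \<ge> 0"
  then obtain \<Phi> :: "real ^ 'n \<Rightarrow> real" where "convex_on UNIV \<Phi>"
      "\<And>x. (\<Phi> has_derivative (\<lambda>h. grad_net s M W c b u v \<beta> x \<bullet> h)) (at x)"
    using grad_net_convex_potential[OF s_cont s_mono] by blast
  with continuous_on_grad_net[OF s_cont] show "\<exists>\<Phi> :: real ^ 'n \<Rightarrow> real. convex_on UNIV \<Phi> \<and>
      (\<forall>x. (\<Phi> has_derivative (\<lambda>h. grad_net s M W c b u v \<beta> x \<bullet> h)) (at x)) \<and>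
      continuous_on UNIV (grad_net s M W c b u v \<beta>)"
    by blast
qed

end
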